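(* Let $a>0$, let $q$ be a continuous complex-valued function on $[-a,a]$, and for $h\in\mathbb{C}$ let $\mathbf{T}_h$ be the operator on $C[-a,a]$ defined in the context. Then for all $h_1,h_2\in\mathbb{C}$ and every $u\in C[-a,a]$, \[ \mathbf{T}_{h_2}u=\mathbf{T}_{h_1}\Big[u(x)+\frac{h_2-h_1}{2}\int_{-x}^{x}u(t)\,dt\Big]. \] In particular, with $T=\mathbf{T}_0$, \[ \mathbf{T}_{h}u=T\Big[u(x)+\frac{h}{2}\int_{-x}^{x}u(t)\,dt\Big]\quad\text{for all } h\in\mathbb{C},\ u\in C[-a,a]. \]
   Context: Let $H(u,v)$ be the unique (continuous) solution of the Goursat problem \[ \frac{\partial^2 H(u,v)}{\partial u\,\partial v}=q(u+v)H(u,v),\qquad H(u,0)=\frac12\int_0^u q(s)\,ds,\qquad H(0,v)=0, \] and put $K(x,t)=H\big(\tfrac{x+t}{2},\tfrac{x-t}{2}\big)$ for $-a\le x\le a$, $|t|\le|x|$. For $h\in\mathbb{C}$ define \[ \mathbf{K}(x,t;h)=\frac h2+K(x,t)+\frac h2\int_t^x\big(K(x,s)-K(x,-s)\big)\,ds, \qquad \mathbf{T}_h u(x)=u(x)+\int_{-x}^{x}\mathbf{K}(x,t;h)\,u(t)\,dt . \] Note $\mathbf{K}(x,t;0)=K(x,t)$, and $T:=\mathbf{T}_0$. *)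

theory Defs
  imports "HOL-Analysis.Analysis"
begin

definition oint :: "real \<Rightarrow> real \<Rightarrow> (real \<Rightarrow> complex) \<Rightarrow> complex" where
  "oint a b f = (if a \<le> b then integral {a..b} f else - integral {b..a} f)"

text \<open>Closed Goursat domain: the points (u,v) = ((x+t)/2,(x-t)/2) with |t| \<le> |x| \<le> a.\<close>
definition goursat_dom :: "real \<Rightarrow> (real \<times> real) set" where
  "goursat_dom a = {(u, v). \<bar>u\<bar> + \<bar>v\<bar> \<le> a}"

definition goursat_sol :: "real \<Rightarrow> (real \<Rightarrow> complex) \<Rightarrow> (real \<Rightarrow> real \<Rightarrow> complex) \<Rightarrow> bool" where
  "goursat_sol a q H \<longleftrightarrow>
     continuous_on (goursat_dom a) (\<lambda>p. H (fst p) (snd p)) \<and>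
     (\<forall>u. \<bar>u\<bar> \<le> a \<longrightarrow> H u 0 = oint 0 u q / 2) \<and>
     (\<forall>v. \<bar>v\<bar> \<le> a \<longrightarrow> H 0 v = 0) \<and>
     (\<forall>u v. \<bar>u\<bar> + \<bar>v\<bar> < a \<longrightarrow> (\<lambda>s. H u s) differentiable (at v)) \<and>
     (\<forall>u v. \<bar>u\<bar> + \<bar>v\<bar> < a \<longrightarrow>
        ((\<lambda>r. vector_derivative (\<lambda>s. H r s) (at v))
           has_vector_derivative (q (u + v) * H u v)) (at u))"

definition Kfun :: "(real \<Rightarrow> real \<Rightarrow> complex) \<Rightarrow> real \<Rightarrow> real \<Rightarrow> complex" where
  "Kfun H x t = H ((x + t) / 2) ((x - t) / 2)"

definition Kh :: "(real \<Rightarrow> real \<Rightarrow> complex) \<Rightarrow> complex \<Rightarrow> real \<Rightarrow> real \<Rightarrow> complex" where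
  "Kh H h x t = h / 2 + Kfun H x t + h / 2 * oint t x (\<lambda>s. Kfun H x s - Kfun H x (- s))"

definition Th :: "(real \<Rightarrow> real \<Rightarrow> complex) \<Rightarrow> complex \<Rightarrow> (real \<Rightarrow> complex) \<Rightarrow> real \<Rightarrow> complex" where
  "Th H h u x = u x + oint (- x) x (\<lambda>t. Kh H h x t * u t)"

end

theory Submission
  imports Defs
begin

(* Fix x, put r = |x| and k = K(x,.). For t in [-r,r] the kernel is k(t) + h/2 (1 + G(t)) with
   G(t) = int_t^r (k(s) - k(-s)) ds, since the odd integrand makes int_t^x and int_t^r agree.
   G is even and vanishes at r, so integration by parts gives int G u = int k U for the odd function
   U(t) = int_{-t}^t u, and int (1 + G) U = 0 by oddness. Hence raising h by 2c adds
   c (int u + int k U) to the integral in T_h u(x), which is exactly what T_h produces from the extra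
   summand c U. *)

lemma integral_odd_eq_0:
  fixes f :: "real \<Rightarrow> 'a::banach"
  assumes "\<And>s. s \<in> {-r..r} \<Longrightarrow> f (-s) = - f s"
  shows "integral {-r..r} f = 0"
proof -
  have "integral {-r..r} f = integral {-r..r} (\<lambda>s. f (-s))"
    using Henstock_Kurzweil_Integration.integral_reflect_real[of r "-r" f] by simp
  also have "\<dots> = integral {-r..r} (\<lambda>s. - f s)"
    by (rule integral_cong) (rule assms)
  also have "\<dots> = - integral {-r..r} f"
    by (rule integral_neg)
  finally have "2 *\<^sub>R integral {-r..r} f = 0"
    by (metis add.right_inverse scaleR_2)
  then show ?thesis by simp
qed

lemma oint_commute: "oint b a f = - oint a b f"
  by (cases "a = b") (auto simp: oint_def)

lemma oint_eq_integral_diff: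
  assumes f: "f integrable_on {c..d}" and "a \<in> {c..d}" "b \<in> {c..d}"
  shows "oint a b f = integral {c..b} f - integral {c..a} f"
proof (cases "a \<le> b")
  case True
  have "integral {c..a} f + integral {a..b} f = integral {c..b} f"
    using assms True by (intro Henstock_Kurzweil_Integration.integral_combine integrable_on_subinterval[OF f]) auto
  with True show ?thesis by (simp add: oint_def algebra_simps)
next
  case False
  have "integral {c..b} f + integral {b..a} f = integral {c..a} f"
    using assms False by (intro Henstock_Kurzweil_Integration.integral_combine integrable_on_subinterval[OF f]) auto
  with False show ?thesis by (simp add: oint_def algebra_simps)
qed

lemma oint_symmetric: "oint (-x) x f = (if 0 \<le> x then 1 else -1) * integral {-\<bar>x\<bar>..\<bar>x\<bar>} f"
  by (auto simp: oint_def)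

lemma oint_symmetric_odd_eq_0:
  assumes "\<And>s. f (-s) = - f s"
  shows "oint (-t) t f = 0"
  using integral_odd_eq_0[of "\<bar>t\<bar>" f] assms by (auto simp: oint_def)

lemma integral_tail_mul_eq_integral_mul_head:
  fixes g u :: "real \<Rightarrow> 'a::{real_normed_field,banach}"
  assumes ab: "a \<le> b" and cg: "continuous_on {a..b} g" and cu: "continuous_on {a..b} u"
  shows "integral {a..b} (\<lambda>t. integral {t..b} g * u t) = integral {a..b} (\<lambda>t. g t * integral {a..t} u)"
proof -
  define G where "G t = integral {t..b} g" for t
  define V where "V t = integral {a..t} u" for t
  have cG: "continuous_on {a..b} G"
    unfolding G_def using cg by (intro indefinite_integral_continuous_1' integrable_continuous_real)
  have cV: "continuous_on {a..b} V"
    unfolding V_def using cu by (intro indefinite_integral_continuous_1 integrable_continuous_real)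
  have "((\<lambda>t. G t * V t) has_vector_derivative (G t * u t - g t * V t)) (at t within {a..b})"
    if "t \<in> {a..b}" for t
    using has_vector_derivative_mult[OF integral_has_vector_derivative'[OF cg that]
        integral_has_vector_derivative[OF cu that]]
    by (simp add: G_def V_def algebra_simps)
  from fundamental_theorem_of_calculus[OF ab this]
  have "((\<lambda>t. G t * u t - g t * V t) has_integral 0) {a..b}"
    by (simp add: G_def V_def)
  then have "integral {a..b} (\<lambda>t. G t * u t) - integral {a..b} (\<lambda>t. g t * V t) = 0"
    by (subst integral_diff[symmetric])
       (auto intro!: integrable_continuous_real continuous_intros cG cV cg cu dest: integral_unique)
  then show ?thesis by (simp add: G_def V_def)
qed

lemma integral_odd_part_mul:
  fixes k V :: "real \<Rightarrow> 'a::{real_normed_field,banach}"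
  assumes ck: "continuous_on {-r..r} k" and cV: "continuous_on {-r..r} V"
  shows "integral {-r..r} (\<lambda>t. (k t - k (-t)) * V t) = integral {-r..r} (\<lambda>t. k t * (V t - V (-t)))"
proof -
  have neg: "uminus ` {-r..r} \<subseteq> {-r..r}" by auto
  have ckm: "continuous_on {-r..r} (\<lambda>t. k (-t))" and cVm: "continuous_on {-r..r} (\<lambda>t. V (-t))"
    by (intro continuous_on_compose2[OF ck] continuous_on_compose2[OF cV] continuous_intros neg)+
  have "integral {-r..r} (\<lambda>t. k (-t) * V t) = integral {-r..r} (\<lambda>t. k t * V (-t))"
    using Henstock_Kurzweil_Integration.integral_reflect_real[of r "-r" "\<lambda>t. k (-t) * V t"] by simp
  moreover have "integral {-r..r} (\<lambda>t. (k t - k (-t)) * V t) =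
      integral {-r..r} (\<lambda>t. k t * V t) - integral {-r..r} (\<lambda>t. k (-t) * V t)"
    unfolding left_diff_distrib
    by (intro integral_diff integrable_continuous_real continuous_intros ck cV ckm)
  moreover have "integral {-r..r} (\<lambda>t. k t * (V t - V (-t))) =
      integral {-r..r} (\<lambda>t. k t * V t) - integral {-r..r} (\<lambda>t. k t * V (-t))"
    unfolding right_diff_distrib
    by (intro integral_diff integrable_continuous_real continuous_intros ck cV cVm)
  ultimately show ?thesis by simp
qed

lemma continuous_on_oint_symmetric:
  fixes u :: "real \<Rightarrow> complex"
  assumes cu: "continuous_on {-r..r} u"
  shows "continuous_on {-r..r} (\<lambda>t. oint (-t) t u)"
proof -
  define V where "V t = integral {-r..t} u" for t
  have cV: "continuous_on {-r..r} V"
    unfolding V_def using cu by (intro indefinite_integral_continuous_1 integrable_continuous_real)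
  have neg: "uminus ` {-r..r} \<subseteq> {-r..r}" by auto
  have oint_eq: "oint (-t) t u = V t - V (-t)" if "t \<in> {-r..r}" for t
    unfolding V_def using that cu by (intro oint_eq_integral_diff integrable_continuous_real) auto
  show ?thesis
    by (rule continuous_on_eq[of _ "\<lambda>t. V t - V (-t)"])
       (auto intro!: continuous_intros cV continuous_on_compose2[OF cV] neg simp: oint_eq)
qed

lemma integral_odd_part_tail_even:
  fixes k :: "real \<Rightarrow> complex"
  assumes ck: "continuous_on {-r..r} k" and t: "t \<in> {-r..r}"
  shows "integral {-t..r} (\<lambda>s. k s - k (-s)) = integral {t..r} (\<lambda>s. k s - k (-s))"
proof -
  define g where "g s = k s - k (-s)" for s
  have cg: "continuous_on {-r..r} g"
    unfolding g_def by (intro continuous_intros ck continuous_on_compose2[OF ck]) auto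
  have "oint (-t) r g - oint t r g = oint (-t) t g"
    using t cg by (simp add: oint_eq_integral_diff[of g "-r" r] integrable_continuous_real)
  also have "\<dots> = 0"
    by (rule oint_symmetric_odd_eq_0) (simp add: g_def)
  finally show ?thesis
    using t by (simp add: g_def[symmetric] oint_def)
qed

lemma integral_odd_part_tail_mul:
  fixes k u :: "real \<Rightarrow> complex"
  assumes r: "0 \<le> r" and ck: "continuous_on {-r..r} k" and cu: "continuous_on {-r..r} u"
  shows "integral {-r..r} (\<lambda>t. integral {t..r} (\<lambda>s. k s - k (-s)) * u t) =
           integral {-r..r} (\<lambda>t. k t * oint (-t) t u)"
proof -
  define V where "V t = integral {-r..t} u" for t
  have cV: "continuous_on {-r..r} V"
    unfolding V_def using cu by (intro indefinite_integral_continuous_1 integrable_continuous_real)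
  have "integral {-r..r} (\<lambda>t. integral {t..r} (\<lambda>s. k s - k (-s)) * u t) =
      integral {-r..r} (\<lambda>t. (k t - k (-t)) * V t)"
    unfolding V_def using r cu
    by (intro integral_tail_mul_eq_integral_mul_head continuous_intros ck continuous_on_compose2[OF ck])
       auto
  also have "\<dots> = integral {-r..r} (\<lambda>t. k t * (V t - V (-t)))"
    using ck cV by (rule integral_odd_part_mul)
  also have "\<dots> = integral {-r..r} (\<lambda>t. k t * oint (-t) t u)"
  proof (rule integral_cong)
    fix t assume "t \<in> {-r..r}"
    then have "oint (-t) t u = V t - V (-t)"
      unfolding V_def using cu by (intro oint_eq_integral_diff integrable_continuous_real) auto
    then show "k t * (V t - V (-t)) = k t * oint (-t) t u" by simp
  qed
  finally show ?thesis .
qed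

lemma integral_kernel_shift:
  fixes k u :: "real \<Rightarrow> complex"
  assumes r: "0 \<le> r" and ck: "continuous_on {-r..r} k" and cu: "continuous_on {-r..r} u"
  defines "G \<equiv> \<lambda>t. integral {t..r} (\<lambda>s. k s - k (-s))"
  shows "integral {-r..r} (\<lambda>t. (k t + h2 / 2 * (1 + G t)) * u t) = (h2 - h1) / 2 * integral {-r..r} u +
           integral {-r..r} (\<lambda>t. (k t + h1 / 2 * (1 + G t)) * (u t + (h2 - h1) / 2 * oint (-t) t u))"
proof -
  define A where "A h t = k t + h / 2 * (1 + G t)" for h t
  define U where "U t = oint (-t) t u" for t
  define c where "c = (h2 - h1) / 2"
  have cG: "continuous_on {-r..r} G"
    unfolding G_def
    by (intro indefinite_integral_continuous_1' integrable_continuous_real continuous_intros ck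
        continuous_on_compose2[OF ck]) auto
  have cU: "continuous_on {-r..r} U"
    unfolding U_def using cu by (rule continuous_on_oint_symmetric)
  have U_odd: "U (-t) = - U t" for t
    unfolding U_def using oint_commute[of t "-t" u] by simp
  have int_U: "integral {-r..r} U = 0"
    by (rule integral_odd_eq_0) (rule U_odd)
  have int_GU: "integral {-r..r} (\<lambda>t. G t * U t) = 0"
    by (rule integral_odd_eq_0) (simp add: G_def integral_odd_part_tail_even[OF ck] U_odd)
  have int_A: "integral {-r..r} (\<lambda>t. A h t * w t) =
      integral {-r..r} (\<lambda>t. k t * w t) + h / 2 * (integral {-r..r} w + integral {-r..r} (\<lambda>t. G t * w t))"
    if cw: "continuous_on {-r..r} w" for h w
  proof -
    have "integral {-r..r} (\<lambda>t. A h t * w t) =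
        integral {-r..r} (\<lambda>t. k t * w t + h / 2 * (w t + G t * w t))"
      by (rule integral_cong) (simp add: A_def algebra_simps)
    then show ?thesis
      by (simp add: integral_add integrable_continuous_real continuous_intros ck cG cw)
  qed
  have "integral {-r..r} (\<lambda>t. A h1 t * (u t + c * U t)) =
      integral {-r..r} (\<lambda>t. A h1 t * u t) + c * integral {-r..r} (\<lambda>t. A h1 t * U t)"
    by (simp add: distrib_left integral_add integrable_continuous_real continuous_intros
        ck cG cu cU A_def mult.left_commute[of _ c])
  also have "integral {-r..r} (\<lambda>t. A h1 t * U t) = integral {-r..r} (\<lambda>t. k t * U t)"
    by (simp add: int_A cU int_U int_GU)
  also have "\<dots> = integral {-r..r} (\<lambda>t. G t * u t)"
    unfolding G_def U_def by (rule integral_odd_part_tail_mul[OF r ck cu, symmetric])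
  finally have shift: "integral {-r..r} (\<lambda>t. A h1 t * (u t + c * U t)) =
      integral {-r..r} (\<lambda>t. A h1 t * u t) + c * integral {-r..r} (\<lambda>t. G t * u t)" .
  have "integral {-r..r} (\<lambda>t. A h2 t * u t) = c * integral {-r..r} u +
      integral {-r..r} (\<lambda>t. A h1 t * (u t + c * U t))"
    unfolding shift int_A[OF cu] by (simp add: c_def field_simps)
  then show ?thesis by (simp add: A_def U_def c_def)
qed

lemma oint_odd_to_abs:
  assumes cg: "continuous_on {-\<bar>x\<bar>..\<bar>x\<bar>} g" and odd: "\<And>s. g (-s) = - g s"
    and t: "t \<in> {-\<bar>x\<bar>..\<bar>x\<bar>}"
  shows "oint t x g = oint t \<bar>x\<bar> g"
proof (cases "0 \<le> x")
  case False
  then have "oint t \<bar>x\<bar> g - oint t x g = oint (-\<bar>x\<bar>) \<bar>x\<bar> g"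
    using t cg by (simp add: oint_eq_integral_diff[of g "-\<bar>x\<bar>" "\<bar>x\<bar>"] integrable_continuous_real)
  with oint_symmetric_odd_eq_0[of g, OF odd] show ?thesis by simp
qed simp

lemma continuous_on_Kfun:
  assumes cH: "continuous_on (goursat_dom a) (\<lambda>p. H (fst p) (snd p))" and x: "\<bar>x\<bar> \<le> a"
  shows "continuous_on {-\<bar>x\<bar>..\<bar>x\<bar>} (Kfun H x)"
proof -
  have "(\<lambda>t. ((x + t) / 2, (x - t) / 2)) ` {-\<bar>x\<bar>..\<bar>x\<bar>} \<subseteq> goursat_dom a"
    using x by (auto simp: goursat_dom_def abs_if field_simps)
  then have "continuous_on {-\<bar>x\<bar>..\<bar>x\<bar>} (\<lambda>t. (\<lambda>p. H (fst p) (snd p)) ((x + t) / 2, (x - t) / 2))"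
    by (intro continuous_on_compose2[OF cH] continuous_intros) auto
  then show ?thesis by (simp add: Kfun_def)
qed

lemma Th_eq_integral:
  assumes cH: "continuous_on (goursat_dom a) (\<lambda>p. H (fst p) (snd p))" and x: "\<bar>x\<bar> \<le> a"
  shows "Th H h w x = w x + (if 0 \<le> x then 1 else -1) * integral {-\<bar>x\<bar>..\<bar>x\<bar>}
           (\<lambda>t. (Kfun H x t + h / 2 * (1 + integral {t..\<bar>x\<bar>} (\<lambda>s. Kfun H x s - Kfun H x (-s)))) * w t)"
proof -
  have ck: "continuous_on {-\<bar>x\<bar>..\<bar>x\<bar>} (Kfun H x)"
    using cH x by (rule continuous_on_Kfun)
  have cg: "continuous_on {-\<bar>x\<bar>..\<bar>x\<bar>} (\<lambda>s. Kfun H x s - Kfun H x (-s))"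
    by (intro continuous_intros ck continuous_on_compose2[OF ck]) auto
  have "Kh H h x t = Kfun H x t + h / 2 * (1 + integral {t..\<bar>x\<bar>} (\<lambda>s. Kfun H x s - Kfun H x (-s)))"
    if "t \<in> {-\<bar>x\<bar>..\<bar>x\<bar>}" for t
    using that oint_odd_to_abs[OF cg _ that] by (simp add: Kh_def oint_def algebra_simps)
  then have "integral {-\<bar>x\<bar>..\<bar>x\<bar>} (\<lambda>t. Kh H h x t * w t) = integral {-\<bar>x\<bar>..\<bar>x\<bar>}
      (\<lambda>t. (Kfun H x t + h / 2 * (1 + integral {t..\<bar>x\<bar>} (\<lambda>s. Kfun H x s - Kfun H x (-s)))) * w t)"
    by (intro integral_cong) simp
  then show ?thesis
    unfolding Th_def oint_symmetric by simp
qed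

lemma Th_shift:
  assumes cH: "continuous_on (goursat_dom a) (\<lambda>p. H (fst p) (snd p))"
    and cu: "continuous_on {-a..a} u" and x: "x \<in> {-a..a}"
  shows "Th H h2 u x = Th H h1 (\<lambda>y. u y + (h2 - h1) / 2 * oint (- y) y u) x"
proof -
  have xa: "\<bar>x\<bar> \<le> a" using x by auto
  have "continuous_on {-\<bar>x\<bar>..\<bar>x\<bar>} u"
    by (rule continuous_on_subset[OF cu]) (use xa in auto)
  from integral_kernel_shift[OF abs_ge_zero continuous_on_Kfun[OF cH xa] this, of h2 h1]
  show ?thesis
    unfolding Th_eq_integral[OF cH xa] oint_symmetric[of x u] by (simp add: algebra_simps)
qed

theorem mainTheorem2:
  fixes a :: real and q :: "real \<Rightarrow> complex" and H :: "real \<Rightarrow> real \<Rightarrow> complex"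
  assumes "a > 0"
    and "continuous_on {-a..a} q"
    and "goursat_sol a q H"
  shows "(\<forall>h1 h2 u x. continuous_on {-a..a} u \<longrightarrow> x \<in> {-a..a} \<longrightarrow>
            Th H h2 u x = Th H h1 (\<lambda>y. u y + (h2 - h1) / 2 * oint (- y) y u) x) \<and>
         (\<forall>h u x. continuous_on {-a..a} u \<longrightarrow> x \<in> {-a..a} \<longrightarrow>
            Th H h u x = Th H 0 (\<lambda>y. u y + h / 2 * oint (- y) y u) x)"
proof -
  have cH: "continuous_on (goursat_dom a) (\<lambda>p. H (fst p) (snd p))"
    using assms(3) by (simp add: goursat_sol_def)
  show ?thesis
    using Th_shift[OF cH] Th_shift[OF cH, of _ _ _ 0] by auto
qed

end
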